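(* Let $X\neq\emptyset$ be a set, $\Phi$ a nonempty set of bounded functions $X\to\mathbb{R}$ that is compact with respect to $D_\Phi$, and $G$ a subgroup of $\mathrm{Homeo}_\Phi(X)$. If $G$ is complete with respect to the pseudo-metric $D_G$, then $G$ is compact with respect to $D_G$.
   Context: $D_\Phi(\varphi_1,\varphi_2):=\|\varphi_1-\varphi_2\|_\infty$. $D_X(x_1,x_2):=\sup_{\varphi\in\Phi}|\varphi(x_1)-\varphi(x_2)|$. $\mathrm{Homeo}_\Phi(X)$ is the group of bijections $g:X\to X$ that are homeomorphisms for the topology of $D_X$ and satisfy $\varphi\circ g\in\Phi$ and $\varphi\circ g^{-1}\in\Phi$ for all $\varphi\in\Phi$. For $g_1,g_2\in G$, $D_G(g_1,g_2):=\sup_{\varphi\in\Phi}D_\Phi(\varphi\circ g_1,\varphi\circ g_2)$. *)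

theory Defs
  imports "HOL-Analysis.Analysis"
begin

definition pmtop :: "'b set \<Rightarrow> ('b \<Rightarrow> 'b \<Rightarrow> real) \<Rightarrow> 'b topology" where
  "pmtop S d = topology (\<lambda>U. U \<subseteq> S \<and> (\<forall>x\<in>U. \<exists>r>0. \<forall>y\<in>S. d x y < r \<longrightarrow> y \<in> U))"

definition pcomplete :: "'b set \<Rightarrow> ('b \<Rightarrow> 'b \<Rightarrow> real) \<Rightarrow> bool" where
  "pcomplete S d \<longleftrightarrow>
     (\<forall>\<sigma>::nat \<Rightarrow> 'b. range \<sigma> \<subseteq> S \<and> (\<forall>e>0. \<exists>N. \<forall>m\<ge>N. \<forall>n\<ge>N. d (\<sigma> m) (\<sigma> n) < e)
        \<longrightarrow> (\<exists>x\<in>S. (\<lambda>n. d (\<sigma> n) x) \<longlonglongrightarrow> 0))"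

definition DPhi :: "('a \<Rightarrow> real) \<Rightarrow> ('a \<Rightarrow> real) \<Rightarrow> real" where
  "DPhi f g = (SUP x. \<bar>f x - g x\<bar>)"

definition DX :: "('a \<Rightarrow> real) set \<Rightarrow> 'a \<Rightarrow> 'a \<Rightarrow> real" where
  "DX Phi x1 x2 = (SUP \<phi>\<in>Phi. \<bar>\<phi> x1 - \<phi> x2\<bar>)"

definition DG :: "('a \<Rightarrow> real) set \<Rightarrow> ('a \<Rightarrow> 'a) \<Rightarrow> ('a \<Rightarrow> 'a) \<Rightarrow> real" where
  "DG Phi g1 g2 = (SUP \<phi>\<in>Phi. DPhi (\<phi> \<circ> g1) (\<phi> \<circ> g2))"

definition HomeoPhi :: "('a \<Rightarrow> real) set \<Rightarrow> ('a \<Rightarrow> 'a) set" where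
  "HomeoPhi Phi = {g. bij g \<and>
      homeomorphic_map (pmtop UNIV (DX Phi)) (pmtop UNIV (DX Phi)) g \<and>
      (\<forall>\<phi>\<in>Phi. \<phi> \<circ> g \<in> Phi \<and> \<phi> \<circ> inv g \<in> Phi)}"

definition subgroup_of :: "('a \<Rightarrow> 'a) set \<Rightarrow> ('a \<Rightarrow> 'a) set \<Rightarrow> bool" where
  "subgroup_of G H \<longleftrightarrow> G \<subseteq> H \<and> id \<in> G \<and>
     (\<forall>g\<in>G. \<forall>h\<in>G. g \<circ> h \<in> G) \<and> (\<forall>g\<in>G. inv g \<in> G)"

end

theory Submission
  imports Defs
begin

text \<open>Glue together the maps at \<open>D\<^sub>G\<close>-distance zero.  The resulting metric space is complete
  because \<open>G\<close> is, and it is totally bounded: fix a finite \<open>\<delta>\<close>-net \<open>F\<close> of the compact \<open>\<Phi>\<close> and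
  record, for each \<open>g\<close>, a net point \<open>\<delta>\<close>-close to \<open>\<phi> \<circ> g\<close> for every \<open>\<phi> \<in> F\<close>.  There are only
  finitely many such records, and two maps with the same record are \<open>4\<delta>\<close>-close, since
  precomposition does not increase \<open>D\<^sub>\<Phi>\<close>.  Hence the metric space is compact, and compactness
  pulls back to \<open>G\<close> because open sets of a pseudo-metric topology are unions of zero-distance
  classes.\<close>

lemma openin_pmtop:
  "openin (pmtop S d) U \<longleftrightarrow> U \<subseteq> S \<and> (\<forall>x\<in>U. \<exists>r>0. \<forall>y\<in>S. d x y < r \<longrightarrow> y \<in> U)"
proof -
  have "istopology (\<lambda>U. U \<subseteq> S \<and> (\<forall>x\<in>U. \<exists>r>0. \<forall>y\<in>S. d x y < r \<longrightarrow> y \<in> U))"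
    unfolding istopology_def
  proof (rule conjI; intro allI impI)
    fix A B assume A: "A \<subseteq> S \<and> (\<forall>x\<in>A. \<exists>r>0. \<forall>y\<in>S. d x y < r \<longrightarrow> y \<in> A)"
      and B: "B \<subseteq> S \<and> (\<forall>x\<in>B. \<exists>r>0. \<forall>y\<in>S. d x y < r \<longrightarrow> y \<in> B)"
    show "A \<inter> B \<subseteq> S \<and> (\<forall>x\<in>A \<inter> B. \<exists>r>0. \<forall>y\<in>S. d x y < r \<longrightarrow> y \<in> A \<inter> B)"
    proof (intro conjI ballI)
      show "A \<inter> B \<subseteq> S" using A by blast
    next
      fix x assume "x \<in> A \<inter> B"
      then obtain r1 r2 where "r1 > 0" "\<forall>y\<in>S. d x y < r1 \<longrightarrow> y \<in> A" "r2 > 0" "\<forall>y\<in>S. d x y < r2 \<longrightarrow> y \<in> B"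
        using A B by blast
      then have "min r1 r2 > 0 \<and> (\<forall>y\<in>S. d x y < min r1 r2 \<longrightarrow> y \<in> A \<inter> B)" by auto
      then show "\<exists>r>0. \<forall>y\<in>S. d x y < r \<longrightarrow> y \<in> A \<inter> B" by blast
    qed
  next
    fix K assume K: "\<forall>A\<in>K. A \<subseteq> S \<and> (\<forall>x\<in>A. \<exists>r>0. \<forall>y\<in>S. d x y < r \<longrightarrow> y \<in> A)"
    then show "\<Union>K \<subseteq> S \<and> (\<forall>x\<in>\<Union>K. \<exists>r>0. \<forall>y\<in>S. d x y < r \<longrightarrow> y \<in> \<Union>K)"
    proof (intro conjI ballI)
      show "\<Union>K \<subseteq> S" using K by blast
    next
      fix x assume "x \<in> \<Union>K"
      then obtain A where "A \<in> K" "x \<in> A" by blast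
      then obtain r where "r > 0" "\<forall>y\<in>S. d x y < r \<longrightarrow> y \<in> A" using K by blast
      then show "\<exists>r>0. \<forall>y\<in>S. d x y < r \<longrightarrow> y \<in> \<Union>K" using \<open>A \<in> K\<close> by blast
    qed
  qed
  then show ?thesis unfolding pmtop_def by simp
qed

lemma topspace_pmtop: "topspace (pmtop S d) = S"
proof -
  have "openin (pmtop S d) S"
    unfolding openin_pmtop using zero_less_one by blast
  then show ?thesis
    by (metis openin_pmtop openin_subset openin_topspace subset_antisym)
qed

definition ptotally_bounded :: "'b set \<Rightarrow> ('b \<Rightarrow> 'b \<Rightarrow> real) \<Rightarrow> bool" where
  "ptotally_bounded S d \<longleftrightarrow> (\<forall>e>0. \<exists>K. finite K \<and> K \<subseteq> S \<and> (\<forall>x\<in>S. \<exists>k\<in>K. d k x < e))"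

lemma ptotally_bounded_if_finite_classifier:
  assumes "finite (f ` S)" and "\<And>x y. x \<in> S \<Longrightarrow> y \<in> S \<Longrightarrow> f x = f y \<Longrightarrow> d x y < e"
  shows "\<exists>K. finite K \<and> K \<subseteq> S \<and> (\<forall>x\<in>S. \<exists>k\<in>K. d k x < e)"
proof (intro exI conjI ballI)
  show "finite (inv_into S f ` f ` S)" "inv_into S f ` f ` S \<subseteq> S"
    using assms(1) by (auto simp: inv_into_into)
next
  fix x assume "x \<in> S"
  then show "\<exists>k\<in>inv_into S f ` f ` S. d k x < e"
    by (metis assms(2) f_inv_into_f image_eqI inv_into_into)
qed

locale Pseudo_metric_space =
  fixes S :: "'b set" and d :: "'b \<Rightarrow> 'b \<Rightarrow> real"
  assumes self_zero [simp]: "x \<in> S \<Longrightarrow> d x x = 0"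
    and commute: "x \<in> S \<Longrightarrow> y \<in> S \<Longrightarrow> d x y = d y x"
    and triangle: "x \<in> S \<Longrightarrow> y \<in> S \<Longrightarrow> z \<in> S \<Longrightarrow> d x z \<le> d x y + d y z"
begin

lemma nonneg: "x \<in> S \<Longrightarrow> y \<in> S \<Longrightarrow> 0 \<le> d x y"
  using triangle[of x y x] commute[of x y] by simp

lemma openin_pmtop_ball: "x \<in> S \<Longrightarrow> openin (pmtop S d) {y\<in>S. d x y < r}"
  unfolding openin_pmtop
proof (intro conjI ballI)
  fix y assume "x \<in> S" "y \<in> {y\<in>S. d x y < r}"
  then show "\<exists>s>0. \<forall>z\<in>S. d y z < s \<longrightarrow> z \<in> {y\<in>S. d x y < r}"
    by (intro exI[of _ "r - d x y"]) (auto dest: triangle[of x y])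
qed auto

lemma ptotally_bounded_if_compactin:
  assumes "compactin (pmtop S d) S"
  shows "ptotally_bounded S d"
  unfolding ptotally_bounded_def
proof (intro allI impI)
  fix e :: real assume "e > 0"
  let ?balls = "(\<lambda>x. {y\<in>S. d x y < e}) ` S"
  have "S \<subseteq> \<Union>?balls"
    using \<open>e > 0\<close> by auto
  moreover have "\<forall>U\<in>?balls. openin (pmtop S d) U"
    using openin_pmtop_ball by blast
  ultimately obtain B where B: "finite B" "B \<subseteq> ?balls" "S \<subseteq> \<Union>B"
    using assms unfolding compactin_def by (metis (no_types, lifting))
  then obtain K where K: "K \<subseteq> S" "finite K" "B = (\<lambda>x. {y\<in>S. d x y < e}) ` K"
    by (meson finite_subset_image)
  have "\<exists>k\<in>K. d k x < e" if "x \<in> S" for x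
    using B(3) K(3) that by auto
  with K(1,2) show "\<exists>K. finite K \<and> K \<subseteq> S \<and> (\<forall>x\<in>S. \<exists>k\<in>K. d k x < e)"
    by blast
qed

lemma bounded_if_ptotally_bounded:
  assumes "ptotally_bounded S d"
  shows "\<exists>b. \<forall>x\<in>S. \<forall>y\<in>S. d x y \<le> b"
proof -
  obtain K where K: "finite K" "K \<subseteq> S" "\<forall>x\<in>S. \<exists>k\<in>K. d k x < 1"
    using assms unfolding ptotally_bounded_def by (metis zero_less_one)
  have "d x y \<le> 2 + Max (case_prod d ` (K \<times> K))" if xy: "x \<in> S" "y \<in> S" for x y
  proof -
    obtain k l where kl: "k \<in> K" "l \<in> K" "d k x < 1" "d l y < 1"
      using K(3) xy by meson
    then have "k \<in> S" "l \<in> S" using K(2) by auto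
    have "d x y \<le> d x k + d k l + d l y"
      using triangle[OF xy(1) \<open>k \<in> S\<close> xy(2)] triangle[OF \<open>k \<in> S\<close> \<open>l \<in> S\<close> xy(2)]
      by (smt (verit))
    moreover have "d k l \<le> Max (case_prod d ` (K \<times> K))"
      using K(1) kl(1,2) by (intro Max_ge) force+
    moreover have "d x k = d k x"
      using xy(1) \<open>k \<in> S\<close> by (rule commute)
    ultimately show ?thesis
      using kl(3,4) by (smt (verit))
  qed
  then show ?thesis by blast
qed

definition zero_class :: "'b \<Rightarrow> 'b set" where
  "zero_class x = {y\<in>S. d x y = 0}"

text \<open>The guard makes \<open>quot_dist\<close> nonnegative and symmetric everywhere, as
  \<open>Metric_space\<close> requires; inside the quotient the choice of representatives is irrelevant.\<close>
definition quot_dist :: "'b set \<Rightarrow> 'b set \<Rightarrow> real" where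
  "quot_dist A B =
     (if A \<in> zero_class ` S \<and> B \<in> zero_class ` S then d (SOME x. x \<in> A) (SOME y. y \<in> B) else 0)"

lemma dist_eq_if_zero_dist:
  assumes "x \<in> S" "x' \<in> S" "y \<in> S" "d x x' = 0"
  shows "d x' y = d x y"
  using triangle[OF assms(2,1,3)] triangle[OF assms(1,2,3)] commute[OF assms(1,2)] assms(4)
  by (smt (verit))

lemma quot_dist_zero_class:
  assumes "x \<in> S" "y \<in> S"
  shows "quot_dist (zero_class x) (zero_class y) = d x y"
proof -
  define x' y' where "x' = (SOME x'. x' \<in> zero_class x)" and "y' = (SOME y'. y' \<in> zero_class y)"
  have "x \<in> zero_class x" "y \<in> zero_class y"
    using assms by (simp_all add: zero_class_def)
  then have "x' \<in> zero_class x" "y' \<in> zero_class y"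
    unfolding x'_def y'_def by (meson someI)+
  then have x': "x' \<in> S" "d x x' = 0" and y': "y' \<in> S" "d y y' = 0"
    by (simp_all add: zero_class_def)
  have "d x' y' = d x y'"
    using dist_eq_if_zero_dist[OF assms(1) x'(1) y'(1) x'(2)] .
  also have "\<dots> = d y' x"
    using assms(1) y'(1) by (rule commute)
  also have "\<dots> = d y x"
    using dist_eq_if_zero_dist[OF assms(2) y'(1) assms(1) y'(2)] .
  also have "\<dots> = d x y"
    using assms(2,1) by (rule commute)
  finally show ?thesis
    using assms unfolding quot_dist_def x'_def y'_def by simp
qed

lemma zero_class_eq_iff:
  assumes "x \<in> S" "y \<in> S"
  shows "zero_class x = zero_class y \<longleftrightarrow> d x y = 0"
proof
  assume "zero_class x = zero_class y"
  then have "y \<in> zero_class x"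
    using assms(2) by (simp add: zero_class_def)
  then show "d x y = 0"
    by (simp add: zero_class_def)
next
  assume "d x y = 0"
  then have "d y z = d x z" if "z \<in> S" for z
    by (rule dist_eq_if_zero_dist[OF assms that])
  then show "zero_class x = zero_class y"
    unfolding zero_class_def by auto
qed

lemma quot_dist_eq_0_outside: "A \<notin> zero_class ` S \<or> B \<notin> zero_class ` S \<Longrightarrow> quot_dist A B = 0"
  unfolding quot_dist_def by auto

lemma Metric_space_quot: "Metric_space (zero_class ` S) quot_dist"
proof
  fix A B
  show "0 \<le> quot_dist A B"
  proof (cases "A \<in> zero_class ` S \<and> B \<in> zero_class ` S")
    case True
    then obtain x y where "x \<in> S" "y \<in> S" "A = zero_class x" "B = zero_class y"
      by blast
    then show ?thesis
      by (simp add: quot_dist_zero_class nonneg)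
  qed (simp add: quot_dist_eq_0_outside)
  show "quot_dist A B = quot_dist B A"
  proof (cases "A \<in> zero_class ` S \<and> B \<in> zero_class ` S")
    case True
    then obtain x y where "x \<in> S" "y \<in> S" "A = zero_class x" "B = zero_class y"
      by blast
    then show ?thesis
      by (simp add: quot_dist_zero_class commute[of x y])
  qed (metis quot_dist_eq_0_outside)
next
  fix A B assume "A \<in> zero_class ` S" "B \<in> zero_class ` S"
  then obtain x y where "x \<in> S" "y \<in> S" "A = zero_class x" "B = zero_class y"
    by blast
  then show "quot_dist A B = 0 \<longleftrightarrow> A = B"
    by (simp add: quot_dist_zero_class zero_class_eq_iff)
next
  fix A B C assume "A \<in> zero_class ` S" "B \<in> zero_class ` S" "C \<in> zero_class ` S"
  then obtain x y z where "x \<in> S" "y \<in> S" "z \<in> S"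
    and "A = zero_class x" "B = zero_class y" "C = zero_class z"
    by blast
  then show "quot_dist A C \<le> quot_dist A B + quot_dist B C"
    by (simp add: quot_dist_zero_class triangle)
qed

end

sublocale Pseudo_metric_space \<subseteq> Quot: Metric_space "zero_class ` S" quot_dist
  by (rule Metric_space_quot)

context Pseudo_metric_space
begin

lemma mcomplete_quot_if_pcomplete:
  assumes "pcomplete S d"
  shows "Quot.mcomplete"
  unfolding Quot.mcomplete_def
proof (intro allI impI)
  fix \<sigma> assume \<sigma>: "Quot.MCauchy \<sigma>"
  then have "\<forall>n. \<exists>x\<in>S. \<sigma> n = zero_class x"
    unfolding Quot.MCauchy_def by blast
  then obtain \<tau> where \<tau>: "\<And>n. \<tau> n \<in> S" "\<And>n. \<sigma> n = zero_class (\<tau> n)"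
    by metis
  have "\<forall>e>0. \<exists>N. \<forall>m\<ge>N. \<forall>n\<ge>N. d (\<tau> m) (\<tau> n) < e"
    using \<sigma> unfolding Quot.MCauchy_def \<tau>(2) quot_dist_zero_class[OF \<tau>(1) \<tau>(1)] by meson
  with assms \<tau>(1) obtain x where x: "x \<in> S" "(\<lambda>n. d (\<tau> n) x) \<longlonglongrightarrow> 0"
    unfolding pcomplete_def by (metis image_subset_iff)
  have "limitin Quot.mtopology \<sigma> (zero_class x) sequentially"
    unfolding Quot.limitin_metric
  proof (intro conjI allI impI)
    fix e :: real assume "e > 0"
    then have "\<forall>\<^sub>F n in sequentially. d (\<tau> n) x < e"
      using order_tendstoD(2)[OF x(2)] by blast
    then show "\<forall>\<^sub>F n in sequentially. \<sigma> n \<in> zero_class ` S \<and> quot_dist (\<sigma> n) (zero_class x) < e"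
      by eventually_elim (simp add: \<tau> x(1) quot_dist_zero_class)
  qed (use x(1) in blast)
  then show "\<exists>A. limitin Quot.mtopology \<sigma> A sequentially"
    by blast
qed

lemma mtotally_bounded_quot_if_ptotally_bounded:
  assumes "ptotally_bounded S d"
  shows "Quot.mtotally_bounded (zero_class ` S)"
  unfolding Quot.mtotally_bounded_def
proof (intro allI impI)
  fix e :: real assume "e > 0"
  then obtain K where K: "finite K" "K \<subseteq> S" "\<forall>x\<in>S. \<exists>k\<in>K. d k x < e"
    using assms unfolding ptotally_bounded_def by metis
  have "zero_class ` S \<subseteq> (\<Union>A\<in>zero_class ` K. Quot.mball A e)"
  proof
    fix A assume "A \<in> zero_class ` S"
    then obtain x where x: "x \<in> S" "A = zero_class x"
      by blast
    then obtain k where k: "k \<in> K" "d k x < e"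
      using K(3) by blast
    with K(2) x have "A \<in> Quot.mball (zero_class k) e"
      by (auto simp: quot_dist_zero_class)
    with k(1) show "A \<in> (\<Union>A\<in>zero_class ` K. Quot.mball A e)"
      by blast
  qed
  with K(1,2) show "\<exists>L. finite L \<and> L \<subseteq> zero_class ` S \<and> zero_class ` S \<subseteq> (\<Union>A\<in>L. Quot.mball A e)"
    by (meson finite_imageI image_mono)
qed

lemma openin_quot_image:
  assumes "openin (pmtop S d) U"
  shows "openin Quot.mtopology (zero_class ` U)"
  unfolding Quot.openin_mtopology
proof (intro conjI allI impI)
  have U: "U \<subseteq> S" "\<forall>x\<in>U. \<exists>r>0. \<forall>y\<in>S. d x y < r \<longrightarrow> y \<in> U"
    using assms by (simp_all add: openin_pmtop)
  show "zero_class ` U \<subseteq> zero_class ` S"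
    using U(1) by (rule image_mono)
  fix A assume "A \<in> zero_class ` U"
  then obtain x where x: "x \<in> U" "A = zero_class x"
    by blast
  then obtain r where r: "r > 0" "\<forall>y\<in>S. d x y < r \<longrightarrow> y \<in> U"
    using U(2) by blast
  have "Quot.mball A r \<subseteq> zero_class ` U"
  proof
    fix B assume "B \<in> Quot.mball A r"
    then obtain y where "y \<in> S" "B = zero_class y" "quot_dist A B < r"
      by auto
    with x U(1) r(2) show "B \<in> zero_class ` U"
      by (auto simp: quot_dist_zero_class)
  qed
  with r(1) show "\<exists>r>0. Quot.mball A r \<subseteq> zero_class ` U"
    by blast
qed

text \<open>Open sets are saturated: a ball of positive radius contains every point at distance zero
  from its centre.\<close>
lemma mem_if_zero_class_mem:
  assumes "openin (pmtop S d) U" "x \<in> S" "zero_class x \<in> zero_class ` U"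
  shows "x \<in> U"
proof -
  obtain u where u: "u \<in> U" "zero_class x = zero_class u"
    using assms(3) by blast
  have U: "U \<subseteq> S" "\<forall>x\<in>U. \<exists>r>0. \<forall>y\<in>S. d x y < r \<longrightarrow> y \<in> U"
    using assms(1) by (simp_all add: openin_pmtop)
  then obtain r where "r > 0" "\<forall>y\<in>S. d u y < r \<longrightarrow> y \<in> U"
    using u(1) by blast
  moreover have "d u x = 0"
    using u U(1) assms(2) zero_class_eq_iff[of u x] by auto
  ultimately show ?thesis
    using assms(2) by simp
qed

lemma compactin_pmtop_if_compact_quot:
  assumes "compact_space Quot.mtopology"
  shows "compactin (pmtop S d) S"
  unfolding compactin_def
proof (intro conjI allI impI)
  show "S \<subseteq> topspace (pmtop S d)"
    by (simp add: topspace_pmtop)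
  fix \<U> assume \<U>: "(\<forall>U\<in>\<U>. openin (pmtop S d) U) \<and> S \<subseteq> \<Union>\<U>"
  have "(\<forall>V\<in>(\<lambda>U. zero_class ` U) ` \<U>. openin Quot.mtopology V) \<and> zero_class ` S \<subseteq> \<Union>((\<lambda>U. zero_class ` U) ` \<U>)"
    using \<U> openin_quot_image by blast
  then obtain \<V> where \<V>: "finite \<V>" "\<V> \<subseteq> (\<lambda>U. zero_class ` U) ` \<U>" "zero_class ` S \<subseteq> \<Union>\<V>"
    using assms unfolding compact_space_def compactin_def Quot.topspace_mtopology by meson
  then obtain \<F> where \<F>: "\<F> \<subseteq> \<U>" "finite \<F>" "\<V> = (\<lambda>U. zero_class ` U) ` \<F>"
    by (meson finite_subset_image)
  have "S \<subseteq> \<Union>\<F>"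
  proof
    fix x assume "x \<in> S"
    then obtain U where "U \<in> \<F>" "zero_class x \<in> zero_class ` U"
      using \<V>(3) \<F>(3) by blast
    with \<open>x \<in> S\<close> \<F>(1) \<U> show "x \<in> \<Union>\<F>"
      using mem_if_zero_class_mem by blast
  qed
  with \<F>(1,2) show "\<exists>\<F>. finite \<F> \<and> \<F> \<subseteq> \<U> \<and> S \<subseteq> \<Union>\<F>"
    by blast
qed

theorem compactin_pmtop_if_pcomplete_ptotally_bounded:
  assumes "pcomplete S d" "ptotally_bounded S d"
  shows "compactin (pmtop S d) S"
  using assms compactin_pmtop_if_compact_quot mcomplete_quot_if_pcomplete
    mtotally_bounded_quot_if_ptotally_bounded Quot.compact_space_eq_mcomplete_mtotally_bounded
  by blast

end

lemma abs_le_DPhi: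
  assumes "bounded (range f)" "bounded (range g)"
  shows "\<bar>f x - g x\<bar> \<le> DPhi f g"
proof -
  have "bounded (range (\<lambda>x. f x - g x))"
    using assms by (rule bounded_minus_comp)
  then have "bdd_above (range (\<lambda>x. \<bar>f x - g x\<bar>))"
    by (auto simp: bounded_iff bdd_above_def)
  then show ?thesis
    unfolding DPhi_def by (rule cSUP_upper[OF UNIV_I])
qed

lemma DPhi_le: "(\<And>x. \<bar>f x - g x\<bar> \<le> c) \<Longrightarrow> DPhi f g \<le> c"
  unfolding DPhi_def by (rule cSUP_least) auto

lemma DPhi_commute: "DPhi f g = DPhi g f"
  unfolding DPhi_def by (simp add: abs_minus_commute)

lemma DPhi_triangle:
  assumes "bounded (range f)" "bounded (range g)" "bounded (range h)"
  shows "DPhi f h \<le> DPhi f g + DPhi g h"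
proof (rule DPhi_le)
  fix x
  have "\<bar>f x - g x\<bar> \<le> DPhi f g" "\<bar>g x - h x\<bar> \<le> DPhi g h"
    using abs_le_DPhi assms by auto
  then show "\<bar>f x - h x\<bar> \<le> DPhi f g + DPhi g h"
    by linarith
qed

lemma DPhi_comp_le:
  assumes "bounded (range f)" "bounded (range g)"
  shows "DPhi (f \<circ> k) (g \<circ> k) \<le> DPhi f g"
  by (rule DPhi_le) (simp add: abs_le_DPhi assms)

lemma Pseudo_metric_space_DPhi:
  assumes "\<And>\<phi>. \<phi> \<in> Phi \<Longrightarrow> bounded (range \<phi>)"
  shows "Pseudo_metric_space Phi DPhi"
proof
  fix f g h assume "f \<in> Phi" "g \<in> Phi" "h \<in> Phi"
  then show "DPhi f h \<le> DPhi f g + DPhi g h"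
    by (intro DPhi_triangle assms)
qed (simp_all add: DPhi_def abs_minus_commute)

locale precomposition_action =
  fixes Phi :: "('a \<Rightarrow> real) set" and G :: "('a \<Rightarrow> 'a) set"
  assumes Phi_nonempty: "Phi \<noteq> {}"
    and Phi_bounded: "\<And>\<phi>. \<phi> \<in> Phi \<Longrightarrow> bounded (range \<phi>)"
    and Phi_ptotally_bounded: "ptotally_bounded Phi DPhi"
    and comp_in_Phi: "\<And>g \<phi>. g \<in> G \<Longrightarrow> \<phi> \<in> Phi \<Longrightarrow> \<phi> \<circ> g \<in> Phi"
begin

interpretation Phi: Pseudo_metric_space Phi DPhi
  using Phi_bounded by (rule Pseudo_metric_space_DPhi)

lemma DPhi_le_DG:
  assumes "g1 \<in> G" "g2 \<in> G" "\<phi> \<in> Phi"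
  shows "DPhi (\<phi> \<circ> g1) (\<phi> \<circ> g2) \<le> DG Phi g1 g2"
proof -
  obtain b where "\<forall>\<phi>\<in>Phi. \<forall>\<psi>\<in>Phi. DPhi \<phi> \<psi> \<le> b"
    using Phi.bounded_if_ptotally_bounded Phi_ptotally_bounded by blast
  then have "bdd_above ((\<lambda>\<phi>. DPhi (\<phi> \<circ> g1) (\<phi> \<circ> g2)) ` Phi)"
    using assms(1,2) comp_in_Phi by (intro bdd_aboveI2) blast
  then show ?thesis
    unfolding DG_def using assms(3) by (rule cSUP_upper2) simp
qed

lemma DG_le:
  "(\<And>\<phi>. \<phi> \<in> Phi \<Longrightarrow> DPhi (\<phi> \<circ> g1) (\<phi> \<circ> g2) \<le> c) \<Longrightarrow> DG Phi g1 g2 \<le> c"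
  unfolding DG_def using Phi_nonempty by (rule cSUP_least)

lemma Pseudo_metric_space_DG: "Pseudo_metric_space G (DG Phi)"
proof
  fix g1 g2 g3 assume g: "g1 \<in> G" "g2 \<in> G" "g3 \<in> G"
  show "DG Phi g1 g3 \<le> DG Phi g1 g2 + DG Phi g2 g3"
  proof (rule DG_le)
    fix \<phi> assume "\<phi> \<in> Phi"
    then have "\<phi> \<circ> g1 \<in> Phi" "\<phi> \<circ> g2 \<in> Phi" "\<phi> \<circ> g3 \<in> Phi"
      using g comp_in_Phi by blast+
    then have "DPhi (\<phi> \<circ> g1) (\<phi> \<circ> g3) \<le> DPhi (\<phi> \<circ> g1) (\<phi> \<circ> g2) + DPhi (\<phi> \<circ> g2) (\<phi> \<circ> g3)"
      by (rule Phi.triangle)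
    also have "\<dots> \<le> DG Phi g1 g2 + DG Phi g2 g3"
      using g \<open>\<phi> \<in> Phi\<close> by (intro add_mono DPhi_le_DG)
    finally show "DPhi (\<phi> \<circ> g1) (\<phi> \<circ> g3) \<le> DG Phi g1 g2 + DG Phi g2 g3" .
  qed
qed (simp_all add: DG_def DPhi_def abs_minus_commute Phi_nonempty)

lemma DG_le_if_common_approximants:
  assumes g: "g \<in> G" "h \<in> G" and F: "F \<subseteq> Phi" "\<forall>\<phi>\<in>Phi. \<exists>\<phi>\<^sub>0\<in>F. DPhi \<phi>\<^sub>0 \<phi> < \<delta>"
    and common: "\<And>\<phi>\<^sub>0. \<phi>\<^sub>0 \<in> F \<Longrightarrow> \<exists>\<psi>\<in>Phi. DPhi \<psi> (\<phi>\<^sub>0 \<circ> g) < \<delta> \<and> DPhi \<psi> (\<phi>\<^sub>0 \<circ> h) < \<delta>"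
  shows "DG Phi g h \<le> 4 * \<delta>"
proof (rule DG_le)
  fix \<phi> assume "\<phi> \<in> Phi"
  then obtain \<phi>\<^sub>0 where \<phi>\<^sub>0: "\<phi>\<^sub>0 \<in> F" "DPhi \<phi>\<^sub>0 \<phi> < \<delta>"
    using F(2) by blast
  then obtain \<psi> where \<psi>: "\<psi> \<in> Phi" "DPhi \<psi> (\<phi>\<^sub>0 \<circ> g) < \<delta>" "DPhi \<psi> (\<phi>\<^sub>0 \<circ> h) < \<delta>"
    using common by blast
  have in_Phi: "\<phi> \<circ> g \<in> Phi" "\<phi>\<^sub>0 \<circ> g \<in> Phi" "\<phi>\<^sub>0 \<circ> h \<in> Phi" "\<phi> \<circ> h \<in> Phi"
    using \<open>\<phi> \<in> Phi\<close> \<phi>\<^sub>0(1) F(1) g comp_in_Phi by blast+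
  have "DPhi (\<phi> \<circ> g) (\<phi> \<circ> h)
      \<le> DPhi (\<phi> \<circ> g) (\<phi>\<^sub>0 \<circ> g) + DPhi (\<phi>\<^sub>0 \<circ> g) \<psi> + DPhi \<psi> (\<phi>\<^sub>0 \<circ> h) + DPhi (\<phi>\<^sub>0 \<circ> h) (\<phi> \<circ> h)"
    using Phi.triangle[OF in_Phi(1) in_Phi(2) \<psi>(1)] Phi.triangle[OF in_Phi(1) \<psi>(1) in_Phi(3)]
      Phi.triangle[OF in_Phi(1) in_Phi(3) in_Phi(4)] by (smt (verit))
  moreover have "DPhi (\<phi> \<circ> g) (\<phi>\<^sub>0 \<circ> g) \<le> DPhi \<phi> \<phi>\<^sub>0" "DPhi (\<phi>\<^sub>0 \<circ> h) (\<phi> \<circ> h) \<le> DPhi \<phi>\<^sub>0 \<phi>"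
    using \<open>\<phi> \<in> Phi\<close> \<phi>\<^sub>0(1) F(1) by (auto intro!: DPhi_comp_le Phi_bounded)
  ultimately show "DPhi (\<phi> \<circ> g) (\<phi> \<circ> h) \<le> 4 * \<delta>"
    using \<phi>\<^sub>0(2) \<psi>(2,3) DPhi_commute[of \<phi> \<phi>\<^sub>0] DPhi_commute[of "\<phi>\<^sub>0 \<circ> g" \<psi>] by (smt (verit))
qed

lemma ptotally_bounded_DG: "ptotally_bounded G (DG Phi)"
  unfolding ptotally_bounded_def
proof (intro allI impI)
  fix e :: real assume "e > 0"
  define \<delta> where "\<delta> = e / 5"
  then have "\<delta> > 0"
    using \<open>e > 0\<close> by simp
  then obtain F where F: "finite F" "F \<subseteq> Phi" "\<forall>\<phi>\<in>Phi. \<exists>\<phi>\<^sub>0\<in>F. DPhi \<phi>\<^sub>0 \<phi> < \<delta>"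
    using Phi_ptotally_bounded unfolding ptotally_bounded_def by metis
  have "\<forall>g\<in>G. \<forall>\<phi>\<in>F. \<exists>\<psi>\<in>F. DPhi \<psi> (\<phi> \<circ> g) < \<delta>"
    using F(2,3) comp_in_Phi by (meson subsetD)
  then obtain approx where approx:
    "\<And>g \<phi>. g \<in> G \<Longrightarrow> \<phi> \<in> F \<Longrightarrow> approx g \<phi> \<in> F \<and> DPhi (approx g \<phi>) (\<phi> \<circ> g) < \<delta>"
    by metis
  have "finite ((\<lambda>g. restrict (approx g) F) ` G)"
    by (rule finite_subset[OF _ finite_PiE[of F "\<lambda>_. F"]]) (auto simp: approx F(1))
  moreover have "DG Phi g h < e"
    if "g \<in> G" "h \<in> G" "restrict (approx g) F = restrict (approx h) F" for g h
  proof -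
    have "DG Phi g h \<le> 4 * \<delta>"
    proof (rule DG_le_if_common_approximants[OF that(1,2) F(2,3)])
      fix \<phi>\<^sub>0 assume "\<phi>\<^sub>0 \<in> F"
      then have "approx g \<phi>\<^sub>0 = approx h \<phi>\<^sub>0"
        using that(3) by (metis restrict_apply')
      then show "\<exists>\<psi>\<in>Phi. DPhi \<psi> (\<phi>\<^sub>0 \<circ> g) < \<delta> \<and> DPhi \<psi> (\<phi>\<^sub>0 \<circ> h) < \<delta>"
        using approx[OF that(1) \<open>\<phi>\<^sub>0 \<in> F\<close>] approx[OF that(2) \<open>\<phi>\<^sub>0 \<in> F\<close>] F(2) by auto
    qed
    then show ?thesis
      using \<open>\<delta> > 0\<close> unfolding \<delta>_def by simp
  qed
  ultimately show "\<exists>K. finite K \<and> K \<subseteq> G \<and> (\<forall>g\<in>G. \<exists>k\<in>K. DG Phi k g < e)"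
    by (rule ptotally_bounded_if_finite_classifier)
qed

end

theorem mainTheorem6:
  fixes Phi :: "('a \<Rightarrow> real) set" and G :: "('a \<Rightarrow> 'a) set"
  assumes "Phi \<noteq> {}"
    and "\<forall>\<phi>\<in>Phi. bounded (range \<phi>)"
    and "compactin (pmtop Phi DPhi) Phi"
    and "subgroup_of G (HomeoPhi Phi)"
    and "pcomplete G (DG Phi)"
  shows "compactin (pmtop G (DG Phi)) G"
proof -
  have Phi: "Pseudo_metric_space Phi DPhi"
    using assms(2) by (intro Pseudo_metric_space_DPhi) simp
  interpret precomposition_action Phi G
  proof
    show "ptotally_bounded Phi DPhi"
      using Phi assms(3) by (rule Pseudo_metric_space.ptotally_bounded_if_compactin)
    show "\<phi> \<circ> g \<in> Phi" if "g \<in> G" "\<phi> \<in> Phi" for g \<phi>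
      using assms(4) that unfolding subgroup_of_def HomeoPhi_def by auto
  qed (use assms(1,2) in simp_all)
  show ?thesis
    using Pseudo_metric_space_DG assms(5) ptotally_bounded_DG
    by (rule Pseudo_metric_space.compactin_pmtop_if_pcomplete_ptotally_bounded)
qed

end
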